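(* Let $m,n,p,c$ be positive integers. The number of lattice paths from $(0,0)$ to $(m-pn,m+n)$ using the steps $(1,1)$ and $(-p,1)$ in the plane that intersect the line $x=c$ equals $$\sum_{\substack{s=c\\ s\equiv c \pmod{p+1}}}^{c+\lfloor\frac{m+n-c}{p+1}\rfloor(p+1)}\frac{c}{s}\binom{s}{\frac{s-c}{p+1}}\binom{m+n-s}{n-\frac{s-c}{p+1}}.$$
   Context: A path with steps $(1,1)$ and $(-p,1)$ is regarded as the polygonal curve formed by its steps; it intersects the line $x=c$ if it touches or crosses that line. $\lfloor x\rfloor$ is the floor function. Binomial coefficients $\binom{N}{j}$ with $N\ge0$ equal $0$ when $j<0$ or $j>N$. *)

theory Defs
  imports Complex_Main
begin

text \<open>A path is a list of steps: True = step (1,1), False = step (-p,1).\<close>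

definition step_x :: "nat \<Rightarrow> bool \<Rightarrow> int" where
  "step_x p b = (if b then 1 else - int p)"

definition xpos :: "nat \<Rightarrow> bool list \<Rightarrow> nat \<Rightarrow> int" where
  "xpos p w k = (\<Sum>i<k. step_x p (w ! i))"

definition paths_to :: "nat \<Rightarrow> int \<Rightarrow> nat \<Rightarrow> bool list set" where
  "paths_to p a b = {w. length w = b \<and> xpos p w (length w) = a}"

definition intersects_line :: "nat \<Rightarrow> bool list \<Rightarrow> int \<Rightarrow> bool" where
  "intersects_line p w c \<longleftrightarrow>
     (\<exists>k<length w. \<exists>t::real. 0 \<le> t \<and> t \<le> 1 \<and>
        (1 - t) * of_int (xpos p w k) + t * of_int (xpos p w (Suc k)) = of_int c)"

definition binom :: "int \<Rightarrow> int \<Rightarrow> int" where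
  "binom N j = (if 0 \<le> j \<and> j \<le> N then int (nat N choose nat j) else 0)"

end

theory Submission
  imports Defs
begin

text \<open>Since right steps have width one, a path meets the line \<open>x = c\<close> (\<open>c > 0\<close>) iff it visits
  a lattice point with abscissa \<open>c\<close>. Cutting at the first such visit splits it uniquely into a
  first-passage path to level \<open>c\<close> and an unrestricted path. The x-coordinate of an endpoint
  determines the number of left steps, so unrestricted paths are counted by a binomial coefficient,
  while first-passage paths of length \<open>c + J(p+1)\<close> are counted by the Raney number
  \<open>c/(c + J(p+1)) * binom(c + J(p+1), J)\<close>: removing the first step gives its recursion.\<close>

lemma xpos_0 [simp]: "xpos p w 0 = 0"
  by (simp add: xpos_def)

lemma xpos_Suc: "xpos p w (Suc k) = xpos p w k + step_x p (w ! k)"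
  by (simp add: xpos_def)

lemma xpos_Cons_Suc [simp]: "xpos p (b # w) (Suc k) = step_x p b + xpos p w k"
  unfolding xpos_def sum.lessThan_Suc_shift by simp

lemma xpos_eq_sum_list_take: "k \<le> length w \<Longrightarrow> xpos p w k = (\<Sum>b\<leftarrow>take k w. step_x p b)"
  by (simp add: xpos_def sum_list_sum_nth min_absorb2 lessThan_atLeast0)

lemma xpos_take: "k \<le> s \<Longrightarrow> s \<le> length w \<Longrightarrow> xpos p (take s w) k = xpos p w k"
  by (simp add: xpos_eq_sum_list_take min_absorb1)

lemma sum_list_step_x: "(\<Sum>b\<leftarrow>w. step_x p b) = int (length w) - int (p + 1) * int (count_list w False)"
  by (induction w) (auto simp: step_x_def algebra_simps)

lemma xpos_length: "xpos p w (length w) = int (length w) - int (p + 1) * int (count_list w False)"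
  by (simp add: xpos_eq_sum_list_take sum_list_step_x)

lemma xpos_length_append:
  "xpos p (u @ v) (length (u @ v)) = xpos p u (length u) + xpos p v (length v)"
  by (simp only: xpos_length) (simp add: algebra_simps)

lemma finite_bool_lists_length: "finite {w :: bool list. length w = L \<and> P w}"
  by (rule finite_subset[OF _ finite_lists_length_eq[of "UNIV :: bool set" L]]) auto

lemma card_bool_lists_count:
  "card {w :: bool list. length w = L \<and> count_list w False = k} = L choose k"
proof (induction L arbitrary: k)
  case 0
  then show ?case by (cases k) (auto simp: Collect_conv_if)
next
  case (Suc L)
  have split: "{w. length w = Suc L \<and> count_list w False = k}
      = Cons True ` {w. length w = L \<and> count_list w False = k}
      \<union> Cons False ` {w. length w = L \<and> Suc (count_list w False) = k}"
    by (auto simp: length_Suc_conv image_iff split: if_splits)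
  have "card {w. length w = Suc L \<and> count_list w False = k}
      = card {w. length w = L \<and> count_list w False = k}
        + card {w. length w = L \<and> Suc (count_list w False) = k}"
    unfolding split by (subst card_Un_disjoint) (auto simp: card_image finite_bool_lists_length)
  then show ?case
    using Suc.IH by (cases k) simp_all
qed

lemma binom_of_nat: "binom (int a) (int b) = int (a choose b)"
  by (auto simp: binom_def binomial_eq_0)

lemma card_paths_to:
  assumes "int L - a = int (p + 1) * j"
  shows "int (card (paths_to p a L)) = binom (int L) j"
proof -
  have paths: "paths_to p a L = {w. length w = L \<and> int (count_list w False) = j}"
    using assms by (auto simp: paths_to_def xpos_length)
  show ?thesis
  proof (cases "0 \<le> j")
    case True
    then obtain k where "j = int k" by (metis nonneg_int_cases)
    then show ?thesis by (simp add: paths binom_of_nat card_bool_lists_count)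
  next
    case False
    then show ?thesis by (simp add: paths binom_def)
  qed
qed

lemma xpos_Suc_le: "xpos p w (Suc k) \<le> xpos p w k + 1"
  by (simp add: xpos_Suc step_x_def)

lemma xpos_attains_level:
  assumes "0 < c" "c \<le> xpos p w k"
  shows "\<exists>i\<le>k. xpos p w i = c"
  using assms(2)
proof (induction k)
  case 0
  then show ?case using assms(1) by simp
next
  case (Suc k)
  show ?case
  proof (cases "c \<le> xpos p w k")
    case True
    then show ?thesis using Suc.IH le_Suc_eq by blast
  next
    case False
    then have "xpos p w (Suc k) = c" using Suc.prems xpos_Suc_le[of p w k] by linarith
    then show ?thesis by blast
  qed
qed

lemma intersects_line_iff_hits:
  assumes "0 < c"
  shows "intersects_line p w c \<longleftrightarrow> (\<exists>k\<le>length w. xpos p w k = c)"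
proof
  assume "intersects_line p w c"
  then obtain k t where k: "k < length w" "0 \<le> t" "t \<le> 1"
    and on_line: "(1 - t) * of_int (xpos p w k) + t * of_int (xpos p w (Suc k)) = (of_int c :: real)"
    unfolding intersects_line_def by blast
  show "\<exists>k\<le>length w. xpos p w k = c"
  proof (cases "w ! k")
    case True
    then have "xpos p w (Suc k) = xpos p w k + 1" by (simp add: xpos_Suc step_x_def)
    then have "of_int c = (of_int (xpos p w k) + t :: real)"
      using on_line by (simp add: algebra_simps)
    then have "c = xpos p w k \<or> c = xpos p w (Suc k)"
      using k \<open>xpos p w (Suc k) = xpos p w k + 1\<close> by linarith
    then show ?thesis using k(1) by (metis Suc_leI less_imp_le_nat)
  next
    case False
    then have "xpos p w (Suc k) \<le> xpos p w k" by (simp add: xpos_Suc step_x_def)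
    then have "t * of_int (xpos p w (Suc k)) \<le> t * (of_int (xpos p w k) :: real)"
      using k by (intro mult_left_mono) auto
    then have "c \<le> xpos p w k" using on_line by (simp add: algebra_simps)
    then show ?thesis using xpos_attains_level[OF assms] k(1) by (meson le_trans less_imp_le_nat)
  qed
next
  assume "\<exists>k\<le>length w. xpos p w k = c"
  then obtain k where k: "k \<le> length w" "xpos p w k = c" by blast
  show "intersects_line p w c"
  proof (cases "k < length w")
    case True
    then show ?thesis unfolding intersects_line_def
      using k by (intro exI[of _ k] conjI exI[of _ 0]) auto
  next
    case False
    moreover have "k \<noteq> 0" using k assms by (metis less_irrefl xpos_0)
    ultimately obtain k' where "k = Suc k'" "k' < length w"
      using k(1) by (metis Suc_le_lessD not0_implies_Suc)
    then show ?thesis unfolding intersects_line_def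
      using k by (intro exI[of _ k'] conjI exI[of _ 1]) auto
  qed
qed

definition first_passages :: "nat \<Rightarrow> int \<Rightarrow> nat \<Rightarrow> bool list set" where
  "first_passages p c s = {w. length w = s \<and> xpos p w s = c \<and> (\<forall>k<s. xpos p w k < c)}"

lemma finite_first_passages: "finite (first_passages p c s)"
  unfolding first_passages_def by (rule finite_bool_lists_length)

lemma first_passages_0: "first_passages p c 0 = (if c = 0 then {[]} else {})"
  by (auto simp: first_passages_def)

lemma first_passages_Suc_nonpos: "c \<le> 0 \<Longrightarrow> first_passages p c (Suc s) = {}"
  by (fastforce simp: first_passages_def)

lemma first_passages_Suc:
  assumes "0 < c"
  shows "first_passages p c (Suc s)
    = Cons True ` first_passages p (c - 1) s \<union> Cons False ` first_passages p (c + int p) s"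
proof -
  have "(\<forall>k<Suc s. P k) \<longleftrightarrow> P 0 \<and> (\<forall>k<s. P (Suc k))" for P
    using less_Suc_eq_0_disj by auto
  then show ?thesis
    using assms by (auto simp: first_passages_def length_Suc_conv step_x_def algebra_simps)
qed

lemma first_passages_endpoint:
  "w \<in> first_passages p c s \<Longrightarrow> c = int s - int (p + 1) * int (count_list w False)"
  using xpos_length[of p w] by (simp add: first_passages_def)

lemma first_passages_empty_if_length_less:
  assumes "int s < c"
  shows "first_passages p c s = {}"
proof -
  have "c \<le> int s" if "w \<in> first_passages p c s" for w
    using first_passages_endpoint[OF that] by simp
  then show ?thesis using assms by fastforce
qed

text \<open>Raney numbers \<open>R\<^sub>q\<^sub>,\<^sub>r(k) = r/(r + kq) * binom(r + kq, k)\<close>, with the usual value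
  \<open>R\<^sub>q\<^sub>,\<^sub>0(0) = 1\<close> where the formula would read \<open>0/0\<close>.\<close>

definition raney :: "nat \<Rightarrow> nat \<Rightarrow> nat \<Rightarrow> real" where
  "raney q r k = (if r + k * q = 0 then 1 else real r / real (r + k * q) * real (r + k * q choose k))"

lemma raney_rec:
  assumes "0 < q"
  shows "raney q (Suc r) (Suc k) = raney q r (Suc k) + raney q (r + q) k"
proof -
  define s where "s = r + Suc k * q"
  have s: "Suc r + Suc k * q = Suc s" "r + q + k * q = s" "0 < s"
    using assms by (simp_all add: s_def)
  have "k \<le> k * q" using assms by simp
  then have k_le: "k \<le> s" using s(2) by linarith
  define B where "B = real (Suc s choose Suc k)"
  have "Suc s * (s choose Suc k) = (s - k) * (Suc s choose Suc k)"
    using binomial_absorb_comp[of "Suc s" "Suc k"] by simp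
  then have shift_k: "real (Suc s) * real (s choose Suc k) = real (s - k) * B"
    unfolding B_def of_nat_mult[symmetric] of_nat_eq_iff .
  have "Suc s * (s choose k) = Suc k * (Suc s choose Suc k)"
    using binomial_absorption[of k "Suc s"] by simp
  then have shift_km1: "real (Suc s) * real (s choose k) = real (Suc k) * B"
    unfolding B_def of_nat_mult[symmetric] of_nat_eq_iff .
  have key: "real r * (real s - real k) + (real r + real q) * real (Suc k) = real (Suc r) * real s"
  proof -
    have "real s = real r + real q + real k * real q"
      unfolding s(2)[symmetric] by simp
    then show ?thesis by (simp add: algebra_simps)
  qed
  have "real s * (real (Suc s) * (raney q r (Suc k) + raney q (r + q) k))
      = real r * (real (Suc s) * real (s choose Suc k)) + (real r + real q) * (real (Suc s) * real (s choose k))"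
    unfolding raney_def s(2) s_def[symmetric] using s(3) by (simp add: field_simps)
  also have "\<dots> = real s * (real (Suc r) * B)"
    unfolding shift_k shift_km1 using k_le key[symmetric] by (simp add: of_nat_diff algebra_simps)
  finally have "real (Suc s) * (raney q r (Suc k) + raney q (r + q) k) = real (Suc r) * B"
    using s(3) by simp
  then have "raney q r (Suc k) + raney q (r + q) k = real (Suc r) * B / real (Suc s)"
    by (simp add: eq_divide_eq mult.commute del: of_nat_Suc)
  moreover have "raney q (Suc r) (Suc k) = real (Suc r) * B / real (Suc s)"
    unfolding raney_def s(1) B_def by simp
  ultimately show ?thesis by simp
qed

lemma card_Cons_image_Un:
  "finite A \<Longrightarrow> finite B \<Longrightarrow> card (Cons True ` A \<union> Cons False ` B) = card A + card B"
  by (subst card_Un_disjoint) (auto simp: card_image)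

lemma card_first_passages:
  "real (card (first_passages p (int c) (c + J * (p + 1)))) = raney (p + 1) c J"
proof (induction "c + J * (p + 1)" arbitrary: c J)
  case 0
  then show ?case by (simp add: first_passages_0 raney_def)
next
  case (Suc s)
  show ?case
  proof (cases c)
    case 0
    then have "0 < J" using Suc.hyps(2) by (cases J) auto
    then show ?thesis
      unfolding Suc.hyps(2)[symmetric] using \<open>c = 0\<close> by (simp add: first_passages_Suc_nonpos raney_def)
  next
    case (Suc c')
    have "first_passages p (int c) (Suc s)
        = Cons True ` first_passages p (int c') s \<union> Cons False ` first_passages p (int (c' + (p + 1))) s"
      using first_passages_Suc[of "int c" p s] Suc by (simp add: algebra_simps)
    then have split: "real (card (first_passages p (int c) (Suc s)))
        = real (card (first_passages p (int c') s)) + real (card (first_passages p (int (c' + (p + 1))) s))"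
      by (simp add: card_Cons_image_Un finite_first_passages)
    show ?thesis
    proof (cases J)
      case 0
      have "s = c'" using Suc.hyps(2) Suc 0 by simp
      then have "first_passages p (int (c' + (p + 1))) s = {}"
        by (simp add: first_passages_empty_if_length_less)
      then show ?thesis
        using split Suc.hyps(1)[of c' 0] Suc.hyps(2) Suc 0 by (simp add: raney_def)
    next
      case (Suc J')
      then show ?thesis
        using split Suc.hyps(1)[of c' J] Suc.hyps(1)[of "c' + (p + 1)" J'] Suc.hyps(2) \<open>c = Suc c'\<close>
        by (simp add: raney_rec algebra_simps)
    qed
  qed
qed

lemma take_in_first_passages_iff:
  "t \<le> length w \<Longrightarrow>
    take t w \<in> first_passages p c t \<longleftrightarrow> xpos p w t = c \<and> (\<forall>k<t. xpos p w k < c)"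
  by (auto simp: first_passages_def xpos_take)

lemma first_passage_prefix_unique:
  assumes "take s w \<in> first_passages p c s" "take s' w \<in> first_passages p c s'"
  shows "s = s'"
proof -
  have "s \<le> length w" "s' \<le> length w"
    using assms by (auto simp: first_passages_def)
  then show ?thesis
    using assms by (simp add: take_in_first_passages_iff) (metis linorder_neqE_nat less_irrefl)
qed

lemma hits_iff_first_passage_prefix:
  assumes "0 < c"
  shows "(\<exists>k\<le>length w. xpos p w k = c) \<longleftrightarrow> (\<exists>t\<le>length w. take t w \<in> first_passages p c t)"
proof
  assume "\<exists>k\<le>length w. xpos p w k = c"
  then obtain k where k: "k \<le> length w" "xpos p w k = c" by blast
  define t where "t = (LEAST k. xpos p w k = c)"
  have "xpos p w t = c" "t \<le> k"
    unfolding t_def using k(2) by (auto intro: LeastI Least_le)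
  moreover have "xpos p w i < c" if "i < t" for i
  proof (rule ccontr)
    assume "\<not> xpos p w i < c"
    then obtain i' where "i' \<le> i" "xpos p w i' = c"
      using xpos_attains_level[OF assms] by (meson not_less)
    then show False using not_less_Least[of i' "\<lambda>k. xpos p w k = c"] that unfolding t_def by simp
  qed
  ultimately show "\<exists>t\<le>length w. take t w \<in> first_passages p c t"
    using k(1) by (intro exI[of _ t]) (simp add: take_in_first_passages_iff)
next
  assume "\<exists>t\<le>length w. take t w \<in> first_passages p c t"
  then show "\<exists>k\<le>length w. xpos p w k = c" by (auto simp: take_in_first_passages_iff)
qed

lemma paths_to_split_at_first_passage:
  assumes "s \<le> N"
  shows "{w \<in> paths_to p e N. take s w \<in> first_passages p c s}
    = (\<lambda>(u, v). u @ v) ` (first_passages p c s \<times> paths_to p (e - c) (N - s))"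
proof (intro set_eqI iffI)
  fix w assume w: "w \<in> {w \<in> paths_to p e N. take s w \<in> first_passages p c s}"
  then have "xpos p (take s w) s = c" "length w = N" "xpos p w N = e"
    by (auto simp: paths_to_def first_passages_def)
  moreover have "xpos p w N = xpos p (take s w) s + xpos p (drop s w) (N - s)"
    using xpos_length_append[of p "take s w" "drop s w"] assms \<open>length w = N\<close> by (simp add: min_absorb2)
  ultimately have "drop s w \<in> paths_to p (e - c) (N - s)"
    by (simp add: paths_to_def)
  then show "w \<in> (\<lambda>(u, v). u @ v) ` (first_passages p c s \<times> paths_to p (e - c) (N - s))"
    using w by (auto intro!: image_eqI[of _ _ "(take s w, drop s w)"])
next
  fix w assume "w \<in> (\<lambda>(u, v). u @ v) ` (first_passages p c s \<times> paths_to p (e - c) (N - s))"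
  then obtain u v where uv: "w = u @ v" "u \<in> first_passages p c s" "v \<in> paths_to p (e - c) (N - s)"
    by auto
  then have "length u = s" "xpos p u s = c" "length v = N - s" "xpos p v (N - s) = e - c"
    by (auto simp: first_passages_def paths_to_def)
  then show "w \<in> {w \<in> paths_to p e N. take s w \<in> first_passages p c s}"
    using uv assms xpos_length_append[of p u v] by (simp add: paths_to_def)
qed

lemma card_paths_to_split_at_first_passage:
  assumes "s \<le> N"
  shows "card {w \<in> paths_to p e N. take s w \<in> first_passages p c s}
    = card (first_passages p c s) * card (paths_to p (e - c) (N - s))"
proof -
  have "inj_on (\<lambda>(u, v). u @ v) (first_passages p c s \<times> paths_to p (e - c) (N - s))"
    by (auto simp: inj_on_def first_passages_def)
  then show ?thesis
    by (simp add: paths_to_split_at_first_passage[OF assms] card_image card_cartesian_product)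
qed

lemma card_paths_to_intersecting:
  assumes "0 < c"
  shows "card {w \<in> paths_to p e N. intersects_line p w c}
    = (\<Sum>s\<le>N. card (first_passages p c s) * card (paths_to p (e - c) (N - s)))"
proof -
  have "{w \<in> paths_to p e N. intersects_line p w c}
      = (\<Union>s\<le>N. {w \<in> paths_to p e N. take s w \<in> first_passages p c s})"
    using assms by (auto simp: paths_to_def intersects_line_iff_hits hits_iff_first_passage_prefix)
  also have "card \<dots> = (\<Sum>s\<le>N. card {w \<in> paths_to p e N. take s w \<in> first_passages p c s})"
    by (rule card_UN_disjoint)
       (auto simp: paths_to_def finite_bool_lists_length dest: first_passage_prefix_unique)
  finally show ?thesis
    by (simp add: card_paths_to_split_at_first_passage)
qed

lemma card_paths_to_intersecting_raney:
  assumes "0 < c"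
  shows "real (card {w \<in> paths_to p e N. intersects_line p w (int c)})
    = (\<Sum>J | c + J * (p + 1) \<le> N.
         raney (p + 1) c J * real (card (paths_to p (e - int c) (N - (c + J * (p + 1))))))"
proof -
  let ?f = "\<lambda>s. real (card (first_passages p (int c) s) * card (paths_to p (e - int c) (N - s)))"
  let ?S = "(\<lambda>J. c + J * (p + 1)) ` {J. c + J * (p + 1) \<le> N}"
  have "first_passages p (int c) s = {}" if "s \<notin> ?S" "s \<le> N" for s
  proof (rule ccontr)
    assume "first_passages p (int c) s \<noteq> {}"
    then obtain w where "w \<in> first_passages p (int c) s" by blast
    then have "s = c + count_list w False * (p + 1)"
      using first_passages_endpoint[of w p "int c" s] by (simp add: algebra_simps flip: of_nat_add of_nat_mult)
    then show False using that by blast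
  qed
  then have "(\<Sum>s\<le>N. ?f s) = (\<Sum>s\<in>?S. ?f s)"
    by (intro sum.mono_neutral_right) auto
  moreover have "inj (\<lambda>J. c + J * (p + 1))"
    by (intro injI) (metis add_left_cancel mult_cancel2 add_is_0 one_neq_zero)
  then have "(\<Sum>s\<in>?S. ?f s) = (\<Sum>J | c + J * (p + 1) \<le> N. ?f (c + J * (p + 1)))"
    by (intro sum.reindex_cong[OF inj_on_subset[OF _ subset_UNIV]]) auto
  moreover have "0 < int c" using assms by simp
  ultimately show ?thesis
    by (simp only: card_paths_to_intersecting[OF \<open>0 < int c\<close>] of_nat_sum of_nat_mult card_first_passages)
qed

lemma progression_below_floor_eq:
  fixes c q N :: nat
  assumes "0 < q"
  shows "{t::int. int c \<le> t \<and> t \<le> int c + \<lfloor>(real N - real c) / real q\<rfloor> * int q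
            \<and> t mod int q = int c mod int q}
       = (\<lambda>J. int (c + J * q)) ` {J. c + J * q \<le> N}"
proof -
  define F where "F = \<lfloor>(real N - real c) / real q\<rfloor>"
  have le_F: "j \<le> F \<longleftrightarrow> j * int q \<le> int N - int c" for j :: int
  proof -
    have "j \<le> F \<longleftrightarrow> real_of_int j * real q \<le> real N - real c"
      using assms by (simp add: F_def le_floor_iff pos_le_divide_eq)
    also have "\<dots> \<longleftrightarrow> j * int q \<le> int N - int c"
      unfolding of_int_le_iff[symmetric, where 'a = real] by simp
    finally show ?thesis .
  qed
  show ?thesis
    unfolding F_def[symmetric]
  proof (intro set_eqI iffI)
    fix t assume "t \<in> {t. int c \<le> t \<and> t \<le> int c + F * int q \<and> t mod int q = int c mod int q}"
    then have t: "int c \<le> t" "t \<le> int c + F * int q" "t mod int q = int c mod int q" by auto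
    define j where "j = (t - int c) div int q"
    have "int q dvd t - int c" using t(3) by (simp add: mod_eq_dvd_iff)
    then have t_eq: "t = int c + j * int q" by (simp add: j_def)
    have "0 \<le> j" using t(1) assms by (simp add: j_def pos_imp_zdiv_nonneg_iff)
    then obtain J where J: "j = int J" by (metis nonneg_int_cases)
    have "j \<le> F" using t(2) assms by (simp add: t_eq)
    then have "int (J * q) \<le> int N - int c" using le_F J by simp
    then have "c + J * q \<le> N" by linarith
    then show "t \<in> (\<lambda>J. int (c + J * q)) ` {J. c + J * q \<le> N}"
      using t_eq J by (intro image_eqI[of _ _ J]) auto
  next
    fix t assume "t \<in> (\<lambda>J. int (c + J * q)) ` {J. c + J * q \<le> N}"
    then obtain J where J: "t = int c + int J * int q" "c + J * q \<le> N" by auto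
    then have "int (J * q) \<le> int N - int c" by linarith
    then have "int J \<le> F" using le_F by simp
    then have "int J * int q \<le> F * int q" using assms by simp
    then show "t \<in> {t. int c \<le> t \<and> t \<le> int c + F * int q \<and> t mod int q = int c mod int q}"
      using J by simp
  qed
qed

lemma raney_times_card_paths_to:
  fixes s :: int
  assumes "0 < c" "s = int (c + J * (p + 1))" "c + J * (p + 1) \<le> m + n"
  shows "raney (p + 1) c J * real (card (paths_to p (int m - int p * int n - int c) (m + n - (c + J * (p + 1)))))
    = real c / real_of_int s * real_of_int (binom s ((s - int c) div int (p + 1)))
        * real_of_int (binom (int (m + n) - s) (int n - (s - int c) div int (p + 1)))"
proof -
  have "s - int c = int J * int (p + 1)" using assms(2) by (simp add: algebra_simps)
  then have J: "(s - int c) div int (p + 1) = int J"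
    by (simp only: nonzero_mult_div_cancel_right of_nat_neq_0)
  have "int (m + n - (c + J * (p + 1))) - (int m - int p * int n - int c) = int (p + 1) * (int n - int J)"
    using assms(3) by (simp add: of_nat_diff algebra_simps)
  from card_paths_to[OF this]
  have "int (card (paths_to p (int m - int p * int n - int c) (m + n - (c + J * (p + 1)))))
      = binom (int (m + n) - s) (int n - int J)"
    using assms(2,3) by (simp add: of_nat_diff)
  then have paths: "real (card (paths_to p (int m - int p * int n - int c) (m + n - (c + J * (p + 1)))))
      = real_of_int (binom (int (m + n) - s) (int n - int J))"
    by (metis of_int_of_nat_eq)
  have "real_of_int (binom s (int J)) = real (c + J * (p + 1) choose J)"
    "real_of_int s = real (c + J * (p + 1))"
    by (simp_all only: assms(2) binom_of_nat of_int_of_nat_eq)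
  then show ?thesis
    unfolding J paths using assms(1) by (simp add: raney_def)
qed

theorem corollary3p1:
  fixes m n p c :: nat
  assumes "m > 0" "n > 0" "p > 0" "c > 0"
  shows "real (card {w \<in> paths_to p (int m - int p * int n) (m + n).
                       intersects_line p w (int c)}) =
    (\<Sum>s \<in> {s::int. int c \<le> s \<and>
               s \<le> int c + \<lfloor>(real (m + n) - real c) / real (p + 1)\<rfloor> * int (p + 1) \<and>
               s mod int (p + 1) = int c mod int (p + 1)}.
       real c / real_of_int s * real_of_int (binom s ((s - int c) div int (p + 1)))
         * real_of_int (binom (int (m + n) - s) (int n - (s - int c) div int (p + 1))))"
proof -
  let ?F = "\<lambda>s. real c / real_of_int s * real_of_int (binom s ((s - int c) div int (p + 1)))
         * real_of_int (binom (int (m + n) - s) (int n - (s - int c) div int (p + 1)))"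
  let ?K = "{J. c + J * (p + 1) \<le> m + n}"
  have "0 < p + 1" by simp
  have inj: "inj_on (\<lambda>J. int (c + J * (p + 1))) ?K"
    by (intro inj_onI) (metis add_left_cancel mult_cancel2 add_is_0 one_neq_zero of_nat_eq_iff)
  have "real (card {w \<in> paths_to p (int m - int p * int n) (m + n). intersects_line p w (int c)})
      = (\<Sum>J\<in>?K. raney (p + 1) c J
           * real (card (paths_to p (int m - int p * int n - int c) (m + n - (c + J * (p + 1))))))"
    by (rule card_paths_to_intersecting_raney[OF assms(4)])
  also have "\<dots> = (\<Sum>J\<in>?K. ?F (int (c + J * (p + 1))))"
    by (intro sum.cong refl raney_times_card_paths_to[OF assms(4)]) auto
  also have "\<dots> = sum ?F ((\<lambda>J. int (c + J * (p + 1))) ` ?K)"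
    by (simp only: sum.reindex[OF inj] comp_def)
  finally show ?thesis
    unfolding progression_below_floor_eq[OF \<open>0 < p + 1\<close>] .
qed

end
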